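(* Let $m\ge1$, $\Sigma=\{1,\ldots,m\}$, and let $\mu:\Sigma^*\to\Sigma^*$ be a morphism with $\mu(1)=1x$ for some $x\in\Sigma^+$, $|\mu(a)|>1$ for all $a\in\Sigma$, and frequency matrix $M$ non-singular with $|M^{-1}|<1$. Let $N=\max_{a\in\Sigma}|\mu(a)|$, let $k$ be a positive integer, and let $t_1=[a_1,\ldots,a_{k+1},d_1,\ldots,d_{k-1}]$ be a $k$-template with $\Delta=\lfloor\max_i|d_i|\rfloor$ (Euclidean norm). Suppose that $\mathcal I$ is a factor of $\mu^\omega(1)$ which is an instance of $t_1$ and $|\mathcal I|>N+k-1+(k-1)[N-2+mk\Delta]$. Then for some parent $t_2$ of $t_1$, $\mu^\omega(1)$ contains a factor $\mathcal J$ which is an instance of $t_2$ and satisfies $|\mathcal J|<|\mathcal I|$.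
   Context: $\mu^\omega(1)$ denotes the infinite fixed point of $\mu$ beginning with $1$ (the limit of $\mu^n(1)$). The Parikh map $\psi:\Sigma^*\to\mathbb{Z}^m$ is $\psi(w)=[|w|_1,\ldots,|w|_m]$ (row vector). The frequency matrix $M$ of $\mu$ has $M_{i,j}=|\mu(i)|_j$. For a real matrix $A$, $|A|=\sup_{v\neq0}|vA|/|v|$ with Euclidean norm on row vectors. A $k$-template is a $2k$-tuple $t=[a_1,\ldots,a_{k+1},d_1,\ldots,d_{k-1}]$ with each $a_i\in\{\epsilon,1,\ldots,m\}$ ($\epsilon$ the empty word) and each $d_i\in\mathbb{Z}^m$. A non-empty word $\mathcal I$ is an instance of $t$ if $\mathcal I=a_1X_1a_2X_2\cdots a_kX_ka_{k+1}$ for words $X_i$ with $\psi(X_{i+1})-\psi(X_i)=d_i$ for $i=1,\ldots,k-1$. Given $k$-templates $t_1=[a_1,\ldots,a_{k+1},d_1,\ldots,d_{k-1}]$ and $t_2=[A_1,\ldots,A_{k+1},D_1,\ldots,D_{k-1}]$, $t_2$ is a parent of $t_1$ if there are words $a_i',a_i''$ ($1\le i\le k+1$) with $\mu(A_i)=a_i'a_ia_i''$ for each $i$ and $\psi(a_{i+1}''a_{i+2}')-\psi(a_i''a_{i+1}')+D_iM=d_i$ for $1\le i\le k-1$. *)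

theory Defs
  imports Complex_Main
begin

text \<open>Alphabet \<Sigma> = {1..m} (letters are naturals), words are nat lists,
  vectors in Z^m / R^m are functions on the index set {1..m},
  m x m matrices are functions nat \<Rightarrow> nat \<Rightarrow> _ on {1..m} x {1..m}.\<close>

definition morph :: "(nat \<Rightarrow> nat list) \<Rightarrow> nat list \<Rightarrow> nat list" where
  "morph \<mu> w = concat (map \<mu> w)"

definition fixpoint_word :: "(nat \<Rightarrow> nat list) \<Rightarrow> nat \<Rightarrow> nat" where
  "fixpoint_word \<mu> = (THE w. \<forall>n. \<forall>i < length ((morph \<mu> ^^ n) [1]). w i = ((morph \<mu> ^^ n) [1]) ! i)"

definition is_factor :: "nat list \<Rightarrow> (nat \<Rightarrow> nat) \<Rightarrow> bool" where
  "is_factor u w \<longleftrightarrow> (\<exists>i. u = map w [i..<i + length u])"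

definition psi :: "nat list \<Rightarrow> nat \<Rightarrow> int" where
  "psi w j = int (count_list w j)"

definition freq_mat :: "(nat \<Rightarrow> nat list) \<Rightarrow> nat \<Rightarrow> nat \<Rightarrow> int" where
  "freq_mat \<mu> i j = int (count_list (\<mu> i) j)"

definition vec_mat :: "nat \<Rightarrow> (nat \<Rightarrow> 'a::comm_ring_1) \<Rightarrow> (nat \<Rightarrow> nat \<Rightarrow> 'a) \<Rightarrow> nat \<Rightarrow> 'a" where
  "vec_mat m v A j = (\<Sum>i=1..m. v i * A i j)"

definition mat_mult :: "nat \<Rightarrow> (nat \<Rightarrow> nat \<Rightarrow> 'a::comm_ring_1) \<Rightarrow> (nat \<Rightarrow> nat \<Rightarrow> 'a) \<Rightarrow> nat \<Rightarrow> nat \<Rightarrow> 'a" where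
  "mat_mult m A B i j = (\<Sum>l=1..m. A i l * B l j)"

definition is_inverse :: "nat \<Rightarrow> (nat \<Rightarrow> nat \<Rightarrow> real) \<Rightarrow> (nat \<Rightarrow> nat \<Rightarrow> real) \<Rightarrow> bool" where
  "is_inverse m A B \<longleftrightarrow>
     (\<forall>i\<in>{1..m}. \<forall>j\<in>{1..m}. mat_mult m A B i j = (if i = j then 1 else 0)
                          \<and> mat_mult m B A i j = (if i = j then 1 else 0))"

definition enorm :: "nat \<Rightarrow> (nat \<Rightarrow> real) \<Rightarrow> real" where
  "enorm m v = sqrt (\<Sum>i=1..m. (v i)\<^sup>2)"

definition opnorm :: "nat \<Rightarrow> (nat \<Rightarrow> nat \<Rightarrow> real) \<Rightarrow> real" where
  "opnorm m A = (SUP v \<in> {v. \<exists>i\<in>{1..m}. v i \<noteq> 0}. enorm m (vec_mat m v A) / enorm m v)"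

definition is_template :: "nat \<Rightarrow> nat \<Rightarrow> (nat \<Rightarrow> nat list) \<Rightarrow> (nat \<Rightarrow> nat \<Rightarrow> int) \<Rightarrow> bool" where
  "is_template m k a d \<longleftrightarrow> (\<forall>i\<in>{1..k+1}. length (a i) \<le> 1 \<and> set (a i) \<subseteq> {1..m})"

definition is_instance :: "nat \<Rightarrow> nat \<Rightarrow> (nat \<Rightarrow> nat list) \<Rightarrow> (nat \<Rightarrow> nat \<Rightarrow> int) \<Rightarrow> nat list \<Rightarrow> bool" where
  "is_instance m k a d I \<longleftrightarrow> I \<noteq> [] \<and>
     (\<exists>X :: nat \<Rightarrow> nat list.
        (\<forall>i\<in>{1..k}. set (X i) \<subseteq> {1..m}) \<and>
        I = concat (map (\<lambda>i. a i @ X i) [1..<k+1]) @ a (k+1) \<and>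
        (\<forall>i\<in>{1..k-1}. \<forall>j\<in>{1..m}. psi (X (i+1)) j - psi (X i) j = d i j))"

text \<open>t2 = [A, D] is a parent of t1 = [a, d].\<close>
definition is_parent :: "nat \<Rightarrow> (nat \<Rightarrow> nat list) \<Rightarrow> nat \<Rightarrow> (nat \<Rightarrow> nat list) \<Rightarrow> (nat \<Rightarrow> nat \<Rightarrow> int)
     \<Rightarrow> (nat \<Rightarrow> nat list) \<Rightarrow> (nat \<Rightarrow> nat \<Rightarrow> int) \<Rightarrow> bool" where
  "is_parent m \<mu> k A D a d \<longleftrightarrow>
     (\<exists>a' a'' :: nat \<Rightarrow> nat list.
        (\<forall>i\<in>{1..k+1}. morph \<mu> (A i) = a' i @ a i @ a'' i) \<and>
        (\<forall>i\<in>{1..k-1}. \<forall>j\<in>{1..m}.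
           psi (a'' (i+1) @ a' (i+2)) j - psi (a'' i @ a' (i+1)) j
             + vec_mat m (D i) (freq_mat \<mu>) j = d i j))"

text \<open>\<Delta> = floor (max_i |d_i|); for k = 1 there are no d_i and \<Delta> is irrelevant (set to 0).\<close>
definition Delta :: "nat \<Rightarrow> nat \<Rightarrow> (nat \<Rightarrow> nat \<Rightarrow> int) \<Rightarrow> int" where
  "Delta m k d = (if k \<le> 1 then 0
     else \<lfloor>Max ((\<lambda>i. enorm m (\<lambda>j. real_of_int (d i j))) ` {1..k-1})\<rfloor>)"

end

theory Submission
  imports Defs
begin

text \<open>Since \<open>\<mu>(1)\<close> starts with \<open>1\<close>, the fixed point \<open>\<omega>\<close> satisfies \<open>\<omega> = \<mu>(\<omega>)\<close>, so it is
  cut into consecutive blocks \<open>\<mu>(\<omega>\<^sub>j)\<close>, each of length between \<open>2\<close> and \<open>N\<close>.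
  Consecutive gaps \<open>X\<^sub>i, X\<^sub>i\<^sub>+\<^sub>1\<close> of an instance differ in length by at most \<open>m\<Delta>\<close>, so the
  length bound on \<open>I\<close> forces every gap to have length at least \<open>N - 1\<close>; hence no block
  meets two of the letters \<open>a\<^sub>i\<close>. Taking for \<open>A\<^sub>i\<close> the (at most one) block covering
  \<open>a\<^sub>i\<close> and for \<open>Y\<^sub>i\<close> the blocks strictly between, \<open>\<psi>(\<mu>(Y)) = \<psi>(Y) M\<close> turns the
  differences of the \<open>\<psi>(X\<^sub>i)\<close> into those of a parent template, and the preimage \<open>J\<close> of
  the blocks meeting \<open>I\<close> is shorter than \<open>I\<close> because every block has length at least 2.\<close>

section \<open>Morphisms and Parikh vectors\<close>

lemma morph_Nil [simp]: "morph \<mu> [] = []"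
  by (simp add: morph_def)

lemma morph_Cons [simp]: "morph \<mu> (c # v) = \<mu> c @ morph \<mu> v"
  by (simp add: morph_def)

lemma morph_append [simp]: "morph \<mu> (u @ v) = morph \<mu> u @ morph \<mu> v"
  by (simp add: morph_def)

lemma set_morph: "set (morph \<mu> v) = (\<Union>c\<in>set v. set (\<mu> c))"
  by (induction v) auto

lemma length_morph_ge_double:
  assumes "\<forall>c\<in>{1..m}. 1 < length (\<mu> c)" and "set v \<subseteq> {1..m}"
  shows "2 * length v \<le> length (morph \<mu> v)"
  using assms(2)
proof (induction v)
  case (Cons c v)
  then have "2 \<le> length (\<mu> c)" using assms(1) by force
  with Cons show ?case by auto
qed simp

lemma psi_append [simp]: "psi (u @ v) j = psi u j + psi v j"
  by (simp add: psi_def)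

lemma psi_morph:
  assumes "set v \<subseteq> {1..m}"
  shows "psi (morph \<mu> v) j = vec_mat m (psi v) (freq_mat \<mu>) j"
  using assms
proof (induction v)
  case Nil
  then show ?case by (simp add: psi_def vec_mat_def)
next
  case (Cons c v)
  then have c: "c \<in> {1..m}" by simp
  have "vec_mat m (psi (c # v)) (freq_mat \<mu>) j
        = (\<Sum>i=1..m. psi v i * freq_mat \<mu> i j + (if c = i then freq_mat \<mu> i j else 0))"
    unfolding vec_mat_def by (rule sum.cong) (auto simp: psi_def algebra_simps)
  also have "\<dots> = vec_mat m (psi v) (freq_mat \<mu>) j + freq_mat \<mu> c j"
    using c by (simp add: sum.distrib vec_mat_def)
  moreover have "psi (\<mu> c) j = freq_mat \<mu> c j"
    by (simp add: psi_def freq_mat_def)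
  ultimately show ?case
    using Cons by simp
qed

lemma vec_mat_diff: "vec_mat m (\<lambda>i. u i - v i) A j = vec_mat m u A j - vec_mat m v A j"
  unfolding vec_mat_def by (simp add: left_diff_distrib sum_subtractf)

lemma length_eq_sum_psi:
  assumes "set v \<subseteq> {1..m}"
  shows "int (length v) = (\<Sum>j=1..m. psi v j)"
  using sum_count_set[OF assms] by (simp add: psi_def flip: of_nat_sum)

lemma Delta_nonneg: "0 \<le> Delta m k d"
proof (cases "k \<le> 1")
  case False
  have "0 \<le> enorm m (\<lambda>j. real_of_int (d 1 j))"
    unfolding enorm_def by (simp add: sum_nonneg)
  also have "\<dots> \<le> Max ((\<lambda>i. enorm m (\<lambda>j. real_of_int (d i j))) ` {1..k-1})"
    using False by (intro Max_ge) auto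
  finally show ?thesis
    using False by (simp add: Delta_def)
qed (simp add: Delta_def)

lemma abs_le_Delta:
  assumes "r \<in> {1..k-1}" and "j \<in> {1..m}"
  shows "\<bar>d r j\<bar> \<le> Delta m k d"
proof -
  let ?v = "\<lambda>j. real_of_int (d r j)"
  have "?v j ^ 2 \<le> (\<Sum>i=1..m. ?v i ^ 2)"
    by (rule member_le_sum) (use assms(2) in auto)
  then have "\<bar>?v j\<bar> \<le> enorm m ?v"
    unfolding enorm_def by (metis real_sqrt_abs real_sqrt_le_mono)
  also have "\<dots> \<le> Max ((\<lambda>i. enorm m (\<lambda>j. real_of_int (d i j))) ` {1..k-1})"
    by (rule Max_ge) (use assms(1) in auto)
  moreover have "\<not> k \<le> 1"
    using assms(1) by auto
  ultimately show ?thesis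
    by (simp add: Delta_def le_floor_iff)
qed

lemma length_diff_le_Delta:
  assumes "set u \<subseteq> {1..m}" and "set v \<subseteq> {1..m}" and "r \<in> {1..k-1}"
    and "\<forall>j\<in>{1..m}. psi v j - psi u j = d r j"
  shows "\<bar>int (length v) - int (length u)\<bar> \<le> int m * Delta m k d"
proof -
  have "int (length v) - int (length u) = (\<Sum>j=1..m. d r j)"
    using assms by (simp add: length_eq_sum_psi sum_subtractf[symmetric])
  also have "\<bar>\<dots>\<bar> \<le> (\<Sum>j=1..m. \<bar>d r j\<bar>)"
    by (rule sum_abs)
  also have "\<dots> \<le> (\<Sum>j=1..m. Delta m k d)"
    using assms(3) by (intro sum_mono abs_le_Delta) auto
  finally show ?thesis by simp
qed

section \<open>Instances of templates\<close>

lemma abs_diff_le_steps: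
  fixes f :: "nat \<Rightarrow> int"
  assumes steps: "\<forall>n. lo \<le> n \<and> n < hi \<longrightarrow> \<bar>f (Suc n) - f n\<bar> \<le> E"
    and "lo \<le> q" and "q \<le> r" and "r \<le> hi"
  shows "\<bar>f r - f q\<bar> \<le> E * int (r - q)"
  using assms(3,4)
proof (induction r rule: dec_induct)
  case (step n)
  then have "\<bar>f (Suc n) - f n\<bar> \<le> E" using assms(2) steps by simp
  with step show ?case by (simp add: algebra_simps of_nat_diff)
qed simp

lemma instance_gaps_long:
  fixes N :: nat
  assumes "1 \<le> N"
    and a_len: "\<forall>r\<in>{1..k+1}. length (a r) \<le> 1"
    and X_set: "\<forall>r\<in>{1..k}. set (X r) \<subseteq> {1..m}"
    and X_diff: "\<forall>r\<in>{1..k-1}. \<forall>j\<in>{1..m}. psi (X (r+1)) j - psi (X r) j = d r j"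
    and I_eq: "I = concat (map (\<lambda>r. a r @ X r) [1..<k+1]) @ a (k+1)"
    and long: "int N + int k - 1 + (int k - 1) * (int N - 2 + int m * int k * Delta m k d)
                 < int (length I)"
    and r: "r \<in> {1..k}"
  shows "N - 1 \<le> length (X r)"
proof (rule ccontr)
  assume "\<not> N - 1 \<le> length (X r)"
  then have short: "int (length (X r)) \<le> int N - 2"
    using \<open>1 \<le> N\<close> by linarith
  define E where "E = int m * Delta m k d"
  have "0 \<le> E"
    unfolding E_def using Delta_nonneg by simp
  have steps: "\<forall>n. 1 \<le> n \<and> n < k \<longrightarrow> \<bar>int (length (X (Suc n))) - int (length (X n))\<bar> \<le> E"
  proof (intro allI impI)
    fix n assume n: "1 \<le> n \<and> n < k"
    then have "set (X n) \<subseteq> {1..m}" "set (X (Suc n)) \<subseteq> {1..m}" "n \<in> {1..k-1}"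
      using X_set by auto
    then show "\<bar>int (length (X (Suc n))) - int (length (X n))\<bar> \<le> E"
      unfolding E_def using X_diff by (intro length_diff_le_Delta) auto
  qed
  have X_le: "int (length (X q)) \<le> int N - 2 + E * (int k - 1)" if q: "q \<in> {1..k}" for q
  proof -
    have "\<bar>int (length (X q)) - int (length (X r))\<bar> \<le> E * int (max q r - min q r)"
      using abs_diff_le_steps[OF steps, of "min q r" "max q r"] q r
      by (cases "q \<le> r") (auto simp: abs_minus_commute)
    also have "\<dots> \<le> E * (int k - 1)"
      using \<open>0 \<le> E\<close> q r by (intro mult_left_mono) auto
    finally show ?thesis
      using short by linarith
  qed
  have "length I = (\<Sum>q\<in>{1..<k+1}. length (a q) + length (X q)) + length (a (k+1))"
    unfolding I_eq by (simp add: length_concat interv_sum_list_conv_sum_set_nat comp_def)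
  then have "int (length I)
        = (\<Sum>q\<in>{1..<k+1}. int (length (a q)) + int (length (X q))) + int (length (a (k+1)))"
    by (simp add: of_nat_sum)
  also have "\<dots> \<le> (\<Sum>q\<in>{1..<k+1}. 1 + (int N - 2 + E * (int k - 1))) + 1"
    using a_len X_le by (intro add_mono sum_mono) (auto simp: atLeastLessThanSuc_atLeastAtMost)
  also have "\<dots> = int N + int k - 1 + (int k - 1) * (int N - 2 + int m * int k * Delta m k d)"
    unfolding E_def by (simp add: algebra_simps)
  finally show False
    using long by simp
qed

lemma map_upt_infix:
  assumes "map f [i..<i + length (u @ v @ t)] = u @ v @ t"
  shows "map f [i + length u..<i + length u + length v] = v"
proof (rule nth_equalityI)
  fix q assume "q < length (map f [i + length u..<i + length u + length v])"
  then have "q < length v" by simp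
  moreover have "map f [i..<i + length (u @ v @ t)] ! (length u + q) = (u @ v @ t) ! (length u + q)"
    using assms by simp
  ultimately show "map f [i + length u..<i + length u + length v] ! q = v ! q"
    by (simp add: nth_append add.assoc)
qed simp

lemma upt_split: "i \<le> j \<Longrightarrow> j \<le> l \<Longrightarrow> [i..<l] = [i..<j] @ [j..<l]"
  using upt_add_eq_append[of i j "l - j"] by simp

lemma map_upt_split3:
  assumes "a \<le> b" and "b \<le> c" and "c \<le> d"
  shows "map f [a..<d] = map f [a..<b] @ map f [b..<c] @ map f [c..<d]"
  using assms upt_split[of a b d] upt_split[of b c d] by simp

lemma factor_positions:
  assumes occ: "map f [i..<i + length I] = I"
    and I_eq: "I = concat (map (\<lambda>r. a r @ X r) [1..<k+1]) @ a (k+1)"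
  obtains p where "p 1 = i" and "p (k+1) + length (a (k+1)) = i + length I"
    and "\<forall>r\<in>{1..k}. p (Suc r) = p r + length (a r) + length (X r)"
    and "\<forall>r\<in>{1..k+1}. map f [p r..<p r + length (a r)] = a r"
    and "\<forall>r\<in>{1..k}. map f [p r + length (a r)..<p (Suc r)] = X r"
proof -
  define C where "C r = concat (map (\<lambda>l. a l @ X l) [1..<r])" for r
  define p where "p r = i + length (C r)" for r
  have C_Suc: "C (Suc r) = C r @ a r @ X r" if "r \<in> {1..k}" for r
    unfolding C_def using that by simp
  have I_at: "I = C r @ a r @ X r @ concat (map (\<lambda>l. a l @ X l) [Suc r..<k+1]) @ a (k+1)"
    if "r \<in> {1..k}" for r
  proof -
    have "[1..<k+1] = [1..<r] @ r # [Suc r..<k+1]"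
      using that upt_split[of 1 r "k+1"] upt_conv_Cons[of r "k+1"] by auto
    then show ?thesis
      using I_eq unfolding C_def by simp
  qed
  have I_end: "I = C (k+1) @ a (k+1) @ []"
    using I_eq unfolding C_def by simp
  have "p 1 = i"
    unfolding p_def C_def by simp
  moreover have "p (k+1) + length (a (k+1)) = i + length I"
    using arg_cong[OF I_end, of length] unfolding p_def by simp
  moreover have "\<forall>r\<in>{1..k}. p (Suc r) = p r + length (a r) + length (X r)"
    unfolding p_def by (simp add: C_Suc)
  moreover have "map f [p r..<p r + length (a r)] = a r" if r: "r \<in> {1..k+1}" for r
  proof (cases "r = k+1")
    case True
    then show ?thesis
      using map_upt_infix[of f i "C (k+1)" "a (k+1)" "[]"] occ I_end unfolding p_def by simp
  next
    case False
    with r have "r \<in> {1..k}"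
      by simp
    then obtain T where "I = C r @ a r @ T"
      using I_at by blast
    then have "map f [i..<i + length (C r @ a r @ T)] = C r @ a r @ T"
      using occ by simp
    then show ?thesis
      unfolding p_def by (rule map_upt_infix)
  qed
  moreover have "map f [p r + length (a r)..<p (Suc r)] = X r" if r: "r \<in> {1..k}" for r
  proof -
    obtain T where "I = (C r @ a r) @ X r @ T"
      using I_at[OF r] by (metis append.assoc)
    then have "map f [i..<i + length ((C r @ a r) @ X r @ T)] = (C r @ a r) @ X r @ T"
      using occ by simp
    then have "map f [i + length (C r @ a r)..<i + length (C r @ a r) + length (X r)] = X r"
      by (rule map_upt_infix)
    then show ?thesis
      unfolding p_def C_Suc[OF r] by (simp add: add.assoc)
  qed
  ultimately show ?thesis
    using that by blast
qed

lemma map_upt_chain: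
  assumes "lo \<le> hi" and "\<forall>r. lo \<le> r \<and> r < hi \<longrightarrow> s r \<le> e r \<and> e r \<le> s (Suc r)"
    and "s hi \<le> e hi"
  shows "concat (map (\<lambda>r. map f [s r..<e r] @ map f [e r..<s (Suc r)]) [lo..<hi])
           @ map f [s hi..<e hi] = map f [s lo..<e hi]"
  using assms
proof (induction hi rule: dec_induct)
  case (step n)
  have n: "s n \<le> e n" "e n \<le> s (Suc n)"
    using step.prems(1) step.hyps by auto
  have IH: "concat (map (\<lambda>r. map f [s r..<e r] @ map f [e r..<s (Suc r)]) [lo..<n])
           @ map f [s n..<e n] = map f [s lo..<e n]"
    using step.IH step.prems(1) n(1) step.hyps by simp
  have "s q \<le> s (Suc q)" if "q \<in> {lo..<n}" for q
    using that step.hyps step.prems(1) le_trans by fastforce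
  then have "s lo \<le> s n"
    using step.hyps lift_Suc_mono_le_ivl[of "{lo..<n}" s lo n] by simp
  then have "map f [s lo..<e (Suc n)]
      = map f [s lo..<e n] @ map f [e n..<s (Suc n)] @ map f [s (Suc n)..<e (Suc n)]"
    using n step.prems(2) by (intro map_upt_split3) auto
  then show ?case
    using step.hyps IH by simp
qed simp

lemma is_parent_of_factorizations:
  assumes A: "\<forall>r\<in>{1..k+1}. morph \<mu> (A r) = a' r @ a r @ a'' r"
    and X: "\<forall>r\<in>{1..k}. X r = a'' r @ morph \<mu> (Y r) @ a' (Suc r)"
    and Y_set: "\<forall>r. set (Y r) \<subseteq> {1..m}"
    and X_diff: "\<forall>r\<in>{1..k-1}. \<forall>j\<in>{1..m}. psi (X (r+1)) j - psi (X r) j = d r j"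
  shows "is_parent m \<mu> k A (\<lambda>r j. psi (Y (r+1)) j - psi (Y r) j) a d"
  unfolding is_parent_def
proof (intro exI conjI ballI)
  fix r assume "r \<in> {1..k+1}"
  then show "morph \<mu> (A r) = a' r @ a r @ a'' r"
    using A by blast
next
  fix r j assume r: "r \<in> {1..k-1}" and j: "j \<in> {1..m}"
  then have "r \<in> {1..k}" and "Suc r \<in> {1..k}"
    by auto
  then have X_r: "X r = a'' r @ morph \<mu> (Y r) @ a' (Suc r)"
    and X_Suc: "X (Suc r) = a'' (Suc r) @ morph \<mu> (Y (Suc r)) @ a' (Suc (Suc r))"
    using X by blast+
  have "d r j = psi (X (Suc r)) j - psi (X r) j"
    using X_diff r j by auto
  also have "\<dots> = psi (a'' (Suc r) @ a' (Suc (Suc r))) j - psi (a'' r @ a' (Suc r)) j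
      + (vec_mat m (psi (Y (Suc r))) (freq_mat \<mu>) j - vec_mat m (psi (Y r)) (freq_mat \<mu>) j)"
    unfolding X_r X_Suc by (simp add: psi_morph[OF Y_set[rule_format]])
  finally show "psi (a'' (r+1) @ a' (r+2)) j - psi (a'' r @ a' (r+1)) j
      + vec_mat m (\<lambda>j. psi (Y (r+1)) j - psi (Y r) j) (freq_mat \<mu>) j = d r j"
    by (simp add: vec_mat_diff numeral_2_eq_2)
qed

section \<open>The fixed point and its blocks\<close>

locale prolongable_morphism =
  fixes m :: nat and \<mu> :: "nat \<Rightarrow> nat list"
  assumes alphabet_nonempty: "1 \<le> m"
    and letters: "\<forall>c\<in>{1..m}. set (\<mu> c) \<subseteq> {1..m}"
    and growing: "\<forall>c\<in>{1..m}. 1 < length (\<mu> c)"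
    and prolongable: "hd (\<mu> 1) = 1"
begin

definition iterate :: "nat \<Rightarrow> nat list" where
  "iterate n = (morph \<mu> ^^ n) [1]"

lemma iterate_Suc: "iterate (Suc n) = morph \<mu> (iterate n)"
  by (simp add: iterate_def)

lemma set_iterate: "set (iterate n) \<subseteq> {1..m}"
proof (induction n)
  case 0
  then show ?case using alphabet_nonempty by (simp add: iterate_def)
next
  case (Suc n)
  then show ?case using letters by (auto simp: iterate_Suc set_morph)
qed

lemma length_iterate_gt: "n < length (iterate n)"
proof -
  have "2 ^ n \<le> length (iterate n)"
  proof (induction n)
    case (Suc n)
    then show ?case
      using length_morph_ge_double[OF growing set_iterate, of n] by (simp add: iterate_Suc)
  qed (simp add: iterate_def)
  then show ?thesis
    using less_exp[of n] by linarith
qed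

lemma iterate_Suc_prefix: "\<exists>t. iterate (Suc n) = iterate n @ t"
proof (induction n)
  case 0
  have "\<mu> 1 \<noteq> []"
    using growing alphabet_nonempty by force
  then have "\<mu> 1 = [1] @ tl (\<mu> 1)"
    using prolongable by (cases "\<mu> 1") auto
  then show ?case
    by (auto simp: iterate_def)
next
  case (Suc n)
  then obtain t where "iterate (Suc n) = iterate n @ t" ..
  then have "iterate (Suc (Suc n)) = iterate (Suc n) @ morph \<mu> t"
    by (simp add: iterate_Suc[of "Suc n"] iterate_Suc[of n])
  then show ?case ..
qed

lemma iterate_prefix: "n \<le> n' \<Longrightarrow> \<exists>t. iterate n' = iterate n @ t"
proof (induction n' rule: dec_induct)
  case (step n')
  with iterate_Suc_prefix[of n'] show ?case
    by (metis append.assoc)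
qed simp

lemma nth_iterate_agree:
  assumes "i < length (iterate n)" and "i < length (iterate n')"
  shows "iterate n ! i = iterate n' ! i"
  using iterate_prefix[of n n'] iterate_prefix[of n' n] assms
  by (cases "n \<le> n'") (auto simp: nth_append)

definition \<omega> :: "nat \<Rightarrow> nat" where
  "\<omega> i = iterate i ! i"

lemma \<omega>_nth_iterate: "i < length (iterate n) \<Longrightarrow> \<omega> i = iterate n ! i"
  unfolding \<omega>_def using nth_iterate_agree length_iterate_gt by blast

lemma fixpoint_word_eq: "fixpoint_word \<mu> = \<omega>"
  unfolding fixpoint_word_def
proof (rule the_equality)
  show "\<forall>n. \<forall>i < length ((morph \<mu> ^^ n) [1]). \<omega> i = ((morph \<mu> ^^ n) [1]) ! i"
    using \<omega>_nth_iterate unfolding iterate_def by blast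
  show "w = \<omega>" if "\<forall>n. \<forall>i < length ((morph \<mu> ^^ n) [1]). w i = ((morph \<mu> ^^ n) [1]) ! i" for w
    using that length_iterate_gt unfolding \<omega>_def iterate_def by blast
qed

lemma \<omega>_letter: "\<omega> i \<in> {1..m}"
  unfolding \<omega>_def using set_iterate length_iterate_gt[of i] nth_mem by blast

lemma map_\<omega>_prefix: "n \<le> length (iterate t) \<Longrightarrow> map \<omega> [0..<n] = take n (iterate t)"
  by (rule nth_equalityI) (auto simp: \<omega>_nth_iterate)

definition bstart :: "nat \<Rightarrow> nat" where
  "bstart j = length (morph \<mu> (map \<omega> [0..<j]))"

lemma bstart_Suc: "bstart (Suc j) = bstart j + length (\<mu> (\<omega> j))"
  by (simp add: bstart_def)

lemma map_\<omega>_bstart: "map \<omega> [0..<bstart j] = morph \<mu> (map \<omega> [0..<j])"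
proof -
  have "j \<le> length (iterate j)"
    using length_iterate_gt[of j] by simp
  then have "iterate (Suc j) = morph \<mu> (map \<omega> [0..<j]) @ morph \<mu> (drop j (iterate j))"
    by (metis append_take_drop_id iterate_Suc map_\<omega>_prefix morph_append)
  moreover from this have "map \<omega> [0..<bstart j] = take (bstart j) (iterate (Suc j))"
    by (intro map_\<omega>_prefix) (simp add: bstart_def)
  ultimately show ?thesis
    by (simp add: bstart_def)
qed

lemma two_le_length_\<mu>_\<omega>: "2 \<le> length (\<mu> (\<omega> j))"
  using growing \<omega>_letter[of j] by force

lemma bstart_add: "bstart j + 2 * t \<le> bstart (j + t)"
proof (induction t)
  case (Suc t)
  then show ?case
    using two_le_length_\<mu>_\<omega>[of "j + t"] by (simp add: bstart_Suc)
qed simp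

lemma strict_mono_bstart: "strict_mono bstart"
  unfolding strict_mono_Suc_iff
proof
  fix n
  show "bstart n < bstart (Suc n)"
    using two_le_length_\<mu>_\<omega>[of n] unfolding bstart_Suc by linarith
qed

lemma map_\<omega>_image:
  assumes "j \<le> j'"
  shows "map \<omega> [bstart j..<bstart j'] = morph \<mu> (map \<omega> [j..<j'])"
proof -
  have "bstart j \<le> bstart j'"
    using strict_mono_bstart assms by (simp add: strict_mono_less_eq)
  then have "map \<omega> [0..<bstart j'] = map \<omega> [0..<bstart j] @ map \<omega> [bstart j..<bstart j']"
    by (simp add: upt_split[of 0 "bstart j" "bstart j'"])
  moreover have "morph \<mu> (map \<omega> [0..<j']) = morph \<mu> (map \<omega> [0..<j]) @ morph \<mu> (map \<omega> [j..<j'])"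
    using assms by (simp add: upt_split[of 0 j j'])
  ultimately show ?thesis
    by (simp add: map_\<omega>_bstart)
qed

text \<open>Position \<open>q\<close> of \<open>\<omega>\<close> lies in the block \<open>\<mu>(\<omega> (block_of q))\<close>, which starts at
  \<open>bstart (block_of q)\<close>; \<open>block_end v\<close> is the first block starting at or after \<open>v\<close>.\<close>

definition block_of :: "nat \<Rightarrow> nat" where
  "block_of q = (LEAST j. q < bstart (Suc j))"

definition block_end :: "nat \<Rightarrow> nat" where
  "block_end v = (LEAST j. v \<le> bstart j)"

lemma less_bstart_Suc_block_of: "q < bstart (Suc (block_of q))"
proof -
  have "q < bstart (Suc q)"
    using bstart_add[of 0 "Suc q"] by simp
  then show ?thesis
    unfolding block_of_def by (rule LeastI)
qed

lemma bstart_block_of_le: "bstart (block_of q) \<le> q"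
proof (cases "block_of q")
  case (Suc j)
  then have "\<not> q < bstart (Suc j)"
    using not_less_Least[of j "\<lambda>j. q < bstart (Suc j)"] unfolding block_of_def by simp
  with Suc show ?thesis by simp
qed (simp add: bstart_def)

lemma le_block_of: "bstart j \<le> q \<Longrightarrow> j \<le> block_of q"
proof (rule ccontr)
  assume "bstart j \<le> q" and "\<not> j \<le> block_of q"
  then have "bstart (Suc (block_of q)) \<le> bstart j"
    using strict_mono_bstart by (simp add: strict_mono_less_eq)
  with \<open>bstart j \<le> q\<close> less_bstart_Suc_block_of[of q] show False
    by simp
qed

lemma le_bstart_block_end: "v \<le> bstart (block_end v)"
proof -
  have "v \<le> bstart v"
    using bstart_add[of 0 v] by simp
  then show ?thesis
    unfolding block_end_def by (rule LeastI)
qed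

lemma block_end_le: "v \<le> bstart j \<Longrightarrow> block_end v \<le> j"
  unfolding block_end_def by (rule Least_le)

lemma bstart_less_of_block_end_Suc: "block_end v = Suc j \<Longrightarrow> bstart j < v"
  using not_less_Least[of j "\<lambda>j. v \<le> bstart j"] unfolding block_end_def by simp

lemma block_cover:
  assumes "u \<le> v" and "v \<le> Suc u"
  shows "block_of u \<le> block_end v" and "block_end v \<le> Suc (block_of u)"
    and "morph \<mu> (map \<omega> [block_of u..<block_end v])
           = map \<omega> [bstart (block_of u)..<u] @ map \<omega> [u..<v] @ map \<omega> [v..<bstart (block_end v)]"
proof -
  show le: "block_of u \<le> block_end v"
  proof (rule ccontr)
    assume "\<not> block_of u \<le> block_end v"
    then have "bstart (Suc (block_end v)) \<le> bstart (block_of u)"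
      using strict_mono_bstart by (simp add: strict_mono_less_eq)
    moreover have "bstart (block_end v) < bstart (Suc (block_end v))"
      using strict_mono_bstart by (simp add: strict_mono_less)
    ultimately show False
      using bstart_block_of_le[of u] le_bstart_block_end[of v] \<open>u \<le> v\<close> by linarith
  qed
  show "block_end v \<le> Suc (block_of u)"
    using less_bstart_Suc_block_of[of u] assms(2) by (intro block_end_le) simp
  show "morph \<mu> (map \<omega> [block_of u..<block_end v])
           = map \<omega> [bstart (block_of u)..<u] @ map \<omega> [u..<v] @ map \<omega> [v..<bstart (block_end v)]"
    unfolding map_\<omega>_image[OF le, symmetric]
    by (rule map_upt_split3[OF bstart_block_of_le assms(1) le_bstart_block_end])
qed

lemma gap_cover:
  assumes N: "\<forall>c\<in>{1..m}. length (\<mu> c) \<le> N" and gap: "v + N - 1 \<le> q"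
  shows "block_end v \<le> block_of q"
    and "map \<omega> [v..<q] = map \<omega> [v..<bstart (block_end v)]
           @ morph \<mu> (map \<omega> [block_end v..<block_of q]) @ map \<omega> [bstart (block_of q)..<q]"
proof -
  show le: "block_end v \<le> block_of q"
  proof (cases "block_end v")
    case (Suc j)
    have "length (\<mu> (\<omega> j)) \<le> N"
      using N \<omega>_letter by blast
    then have "bstart (Suc j) \<le> q"
      using bstart_less_of_block_end_Suc[OF Suc] gap by (simp add: bstart_Suc)
    with Suc show ?thesis
      by (simp add: le_block_of)
  qed simp
  have "bstart (block_end v) \<le> bstart (block_of q)"
    using le strict_mono_bstart by (simp add: strict_mono_less_eq)
  then show "map \<omega> [v..<q] = map \<omega> [v..<bstart (block_end v)]
           @ morph \<mu> (map \<omega> [block_end v..<block_of q]) @ map \<omega> [bstart (block_of q)..<q]"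
    unfolding map_\<omega>_image[OF le, symmetric]
    by (rule map_upt_split3[OF le_bstart_block_end _ bstart_block_of_le])
qed

lemma block_count:
  assumes "q < v"
  shows "block_of q < block_end v" and "2 * (block_end v - block_of q) \<le> v - q + 2"
proof -
  have "bstart (block_of q) < bstart (block_end v)"
    using bstart_block_of_le[of q] le_bstart_block_end[of v] assms by linarith
  then show "block_of q < block_end v"
    using strict_mono_bstart by (simp add: strict_mono_less)
  show "2 * (block_end v - block_of q) \<le> v - q + 2"
  proof (cases "block_end v \<le> Suc (block_of q)")
    case False
    define t where "t = block_end v - Suc (Suc (block_of q))"
    with False have t: "block_end v = Suc (Suc (block_of q) + t)"
      by simp
    have "q + 1 + 2 * t \<le> bstart (Suc (block_of q) + t)"
      using less_bstart_Suc_block_of[of q] bstart_add[of "Suc (block_of q)" t] by simp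
    also have "\<dots> < v"
      using bstart_less_of_block_end_Suc[OF t] .
    finally show ?thesis
      using t by simp
  qed simp
qed

lemma desubstitution:
  assumes N: "\<forall>c\<in>{1..m}. length (\<mu> c) \<le> N"
    and a_len: "\<forall>r\<in>{1..k+1}. length (a r) \<le> 1"
    and p_Suc: "\<forall>r\<in>{1..k}. p (Suc r) = p r + length (a r) + length (X r)"
    and a_at: "\<forall>r\<in>{1..k+1}. map \<omega> [p r..<p r + length (a r)] = a r"
    and X_at: "\<forall>r\<in>{1..k}. map \<omega> [p r + length (a r)..<p (Suc r)] = X r"
    and X_long: "\<forall>r\<in>{1..k}. N - 1 \<le> length (X r)"
    and X_diff: "\<forall>r\<in>{1..k-1}. \<forall>j\<in>{1..m}. psi (X (r+1)) j - psi (X r) j = d r j"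
    and nonempty: "p 1 < p (k+1) + length (a (k+1))"
  obtains A D J where "is_template m k A D" and "is_parent m \<mu> k A D a d"
    and "is_factor J \<omega>" and "is_instance m k A D J"
    and "2 * length J \<le> p (k+1) + length (a (k+1)) - p 1 + 2"
proof -
  have "2 \<le> N"
    using N growing alphabet_nonempty by force
  define s where "s r = block_of (p r)" for r
  define e where "e r = block_end (p r + length (a r))" for r
  define A where "A r = map \<omega> [s r..<e r]" for r
  define Y where "Y r = map \<omega> [e r..<s (Suc r)]" for r
  define J where "J = map \<omega> [s 1..<e (k+1)]"
  have A_cover: "s r \<le> e r \<and> e r \<le> Suc (s r) \<and> morph \<mu> (A r)
      = map \<omega> [bstart (s r)..<p r] @ a r @ map \<omega> [p r + length (a r)..<bstart (e r)]"
    if "r \<in> {1..k+1}" for r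
    using block_cover[of "p r" "p r + length (a r)"] a_len a_at that
    unfolding s_def e_def A_def by auto
  have Y_cover: "e r \<le> s (Suc r) \<and> X r
      = map \<omega> [p r + length (a r)..<bstart (e r)] @ morph \<mu> (Y r) @ map \<omega> [bstart (s (Suc r))..<p (Suc r)]"
    if r: "r \<in> {1..k}" for r
  proof -
    have "p r + length (a r) + N - 1 \<le> p (Suc r)"
      using p_Suc X_long \<open>2 \<le> N\<close> r by fastforce
    from gap_cover[OF N this] show ?thesis
      using X_at r unfolding s_def e_def Y_def by auto
  qed
  have Y_set: "\<forall>r. set (Y r) \<subseteq> {1..m}"
    unfolding Y_def using \<omega>_letter by (simp add: image_subset_iff)
  have parent: "is_parent m \<mu> k A (\<lambda>r j. psi (Y (r+1)) j - psi (Y r) j) a d"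
    by (rule is_parent_of_factorizations) (use A_cover Y_cover Y_set X_diff in \<open>auto simp: Y_def\<close>)
  have J_eq: "J = concat (map (\<lambda>r. A r @ Y r) [1..<k+1]) @ A (k+1)"
    unfolding J_def A_def Y_def using A_cover Y_cover
    by (intro map_upt_chain[symmetric]) auto
  have "s 1 < e (k+1)" and length_J: "2 * length J \<le> p (k+1) + length (a (k+1)) - p 1 + 2"
    using block_count[OF nonempty] unfolding J_def s_def e_def by simp_all
  then have "J \<noteq> []" and factor: "is_factor J \<omega>"
    unfolding is_factor_def J_def by (simp_all add: exI[of _ "s 1"])
  then have "is_instance m k A (\<lambda>r j. psi (Y (r+1)) j - psi (Y r) j) J"
    unfolding is_instance_def using J_eq Y_set by (intro conjI exI[of _ Y]) auto
  moreover have "is_template m k A D" for D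
    using A_cover \<omega>_letter unfolding is_template_def A_def by (fastforce simp: image_subset_iff)
  ultimately show ?thesis
    using that parent factor length_J by blast
qed

end

theorem lemma5:
  fixes m k :: nat and \<mu> :: "nat \<Rightarrow> nat list" and x :: "nat list"
    and a :: "nat \<Rightarrow> nat list" and d :: "nat \<Rightarrow> nat \<Rightarrow> int" and I :: "nat list"
  assumes "m \<ge> 1"
    and "\<forall>c\<in>{1..m}. set (\<mu> c) \<subseteq> {1..m}"
    and "set x \<subseteq> {1..m}" and "x \<noteq> []" and "\<mu> 1 = 1 # x"
    and "\<forall>c\<in>{1..m}. length (\<mu> c) > 1"
    and "\<exists>Minv. is_inverse m (\<lambda>i j. real_of_int (freq_mat \<mu> i j)) Minv \<and> opnorm m Minv < 1"
    and "k \<ge> 1"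
    and "is_template m k a d"
    and "is_factor I (fixpoint_word \<mu>)"
    and "is_instance m k a d I"
    and "int (length I) > int (Max ((\<lambda>c. length (\<mu> c)) ` {1..m})) + int k - 1
           + (int k - 1) * (int (Max ((\<lambda>c. length (\<mu> c)) ` {1..m})) - 2 + int m * int k * Delta m k d)"
  shows "\<exists>A D. is_template m k A D \<and> is_parent m \<mu> k A D a d \<and>
           (\<exists>J. is_factor J (fixpoint_word \<mu>) \<and> is_instance m k A D J \<and> length J < length I)"
proof -
  interpret prolongable_morphism m \<mu>
    using assms(1,2,5,6) by unfold_locales auto
  define N where "N = Max ((\<lambda>c. length (\<mu> c)) ` {1..m})"
  have N: "\<forall>c\<in>{1..m}. length (\<mu> c) \<le> N"
    unfolding N_def by simp
  moreover have "2 \<le> N"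
    using N assms(1,6) by force
  moreover obtain X where X_set: "\<forall>r\<in>{1..k}. set (X r) \<subseteq> {1..m}"
    and I_eq: "I = concat (map (\<lambda>r. a r @ X r) [1..<k+1]) @ a (k+1)"
    and X_diff: "\<forall>r\<in>{1..k-1}. \<forall>j\<in>{1..m}. psi (X (r+1)) j - psi (X r) j = d r j"
    using assms(11) unfolding is_instance_def by blast
  moreover have a_len: "\<forall>r\<in>{1..k+1}. length (a r) \<le> 1"
    using assms(9) unfolding is_template_def by blast
  moreover have long: "int N + int k - 1 + (int k - 1) * (int N - 2 + int m * int k * Delta m k d)
                 < int (length I)"
    using assms(12) unfolding N_def .
  ultimately have X_long: "\<forall>r\<in>{1..k}. N - 1 \<le> length (X r)"
    using instance_gaps_long[OF _ a_len X_set X_diff I_eq long] by simp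
  have "0 \<le> (int k - 1) * (int N - 2 + int m * int k * Delta m k d)"
    using Delta_nonneg[of m k d] \<open>2 \<le> N\<close> assms(8) by simp
  then have "3 \<le> length I"
    using long \<open>2 \<le> N\<close> assms(8) by linarith
  obtain i where "map \<omega> [i..<i + length I] = I"
    using assms(10) unfolding is_factor_def fixpoint_word_eq by (metis (no_types))
  then obtain p where "p 1 = i" and p_end: "p (k+1) + length (a (k+1)) = i + length I"
    and p_Suc: "\<forall>r\<in>{1..k}. p (Suc r) = p r + length (a r) + length (X r)"
    and a_at: "\<forall>r\<in>{1..k+1}. map \<omega> [p r..<p r + length (a r)] = a r"
    and X_at: "\<forall>r\<in>{1..k}. map \<omega> [p r + length (a r)..<p (Suc r)] = X r"
    using I_eq by (rule factor_positions)
  moreover have "p 1 < p (k+1) + length (a (k+1))"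
    using \<open>3 \<le> length I\<close> \<open>p 1 = i\<close> p_end by linarith
  ultimately obtain A D J where "is_template m k A D" and "is_parent m \<mu> k A D a d"
    and "is_factor J \<omega>" and "is_instance m k A D J"
    and "2 * length J \<le> p (k+1) + length (a (k+1)) - p 1 + 2"
    using desubstitution[OF N a_len p_Suc a_at X_at X_long X_diff] by blast
  moreover from this(5) have "length J < length I"
    using \<open>3 \<le> length I\<close> \<open>p 1 = i\<close> p_end by linarith
  ultimately show ?thesis
    unfolding fixpoint_word_eq by blast
qed

end
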